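(* Let $Q$ be a commutative Moufang loop with multiplication group $\mathfrak M$. Then the center $Z(\mathfrak M)$ of $\mathfrak M$ is exactly $\{L(a): a\in Z(Q)\}$, and the map $a\mapsto L(a)$ is an isomorphism from $Z(Q)$ onto $Z(\mathfrak M)$.
   Context: A commutative Moufang loop is a commutative loop $(Q,\cdot)$ with identity $1$ satisfying $x^2\cdot yz=xy\cdot xz$. The translation $L(x)$ is $y\mapsto xy$; $\mathfrak M$ is the permutation group of $Q$ generated by all $L(x)$. The center of $Q$ is $Z(Q)=\{x\in Q: x\cdot yz=xy\cdot z\ \forall y,z\in Q\}$. *)

theory Defs
  imports "HOL-Algebra.Algebra"
begin

definition loop :: "'a set \<Rightarrow> ('a \<Rightarrow> 'a \<Rightarrow> 'a) \<Rightarrow> 'a \<Rightarrow> bool" where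
  "loop Q m e \<longleftrightarrow>
     e \<in> Q \<and> (\<forall>x\<in>Q. \<forall>y\<in>Q. m x y \<in> Q) \<and>
     (\<forall>x\<in>Q. m e x = x \<and> m x e = x) \<and>
     (\<forall>a\<in>Q. \<forall>b\<in>Q. (\<exists>!x. x \<in> Q \<and> m a x = b) \<and> (\<exists>!y. y \<in> Q \<and> m y a = b))"

definition comm_moufang_loop :: "'a set \<Rightarrow> ('a \<Rightarrow> 'a \<Rightarrow> 'a) \<Rightarrow> 'a \<Rightarrow> bool" where
  "comm_moufang_loop Q m e \<longleftrightarrow>
     loop Q m e \<and> (\<forall>x\<in>Q. \<forall>y\<in>Q. m x y = m y x) \<and>
     (\<forall>x\<in>Q. \<forall>y\<in>Q. \<forall>z\<in>Q. m (m x x) (m y z) = m (m x y) (m x z))"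

definition Ltr :: "'a set \<Rightarrow> ('a \<Rightarrow> 'a \<Rightarrow> 'a) \<Rightarrow> 'a \<Rightarrow> ('a \<Rightarrow> 'a)" where
  "Ltr Q m x = (\<lambda>y\<in>Q. m x y)"

definition mult_group :: "'a set \<Rightarrow> ('a \<Rightarrow> 'a \<Rightarrow> 'a) \<Rightarrow> ('a \<Rightarrow> 'a) monoid" where
  "mult_group Q m = (BijGroup Q)\<lparr>carrier := generate (BijGroup Q) (Ltr Q m ` Q)\<rparr>"

definition loop_center :: "'a set \<Rightarrow> ('a \<Rightarrow> 'a \<Rightarrow> 'a) \<Rightarrow> 'a set" where
  "loop_center Q m = {x \<in> Q. \<forall>y\<in>Q. \<forall>z\<in>Q. m x (m y z) = m (m x y) z}"

definition loop_center_struct :: "'a set \<Rightarrow> ('a \<Rightarrow> 'a \<Rightarrow> 'a) \<Rightarrow> 'a \<Rightarrow> 'a monoid" where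
  "loop_center_struct Q m e = \<lparr>carrier = loop_center Q m, monoid.mult = m, one = e\<rparr>"

definition group_center :: "('g, 'b) monoid_scheme \<Rightarrow> 'g set" where
  "group_center G = {g \<in> carrier G. \<forall>h\<in>carrier G. g \<otimes>\<^bsub>G\<^esub> h = h \<otimes>\<^bsub>G\<^esub> g}"

end

theory Submission
  imports Defs
begin

(*
  1. Group theory: an element commuting with a generating set commutes with the
     whole generated subgroup (its centralizer is a subgroup).
  2. Loops: translations are bijections of Q, L is injective (evaluate at e), and
     L(a) o L(b) = L(ab) whenever a is central.
  3. Commutative loops: for a in Z(Q), L(a) commutes with every L(x); conversely a
     permutation commuting with every L(x) is L(a) for a = phi(e), and this a is central.
  Together these identify Z(Mlt Q) with L(Z(Q)); the homomorphism property and
  injectivity of L then give the isomorphism.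
*)

definition centralizer :: "('g, 'b) monoid_scheme \<Rightarrow> 'g \<Rightarrow> 'g set" where
  "centralizer G c = {h \<in> carrier G. c \<otimes>\<^bsub>G\<^esub> h = h \<otimes>\<^bsub>G\<^esub> c}"

lemma (in group) centralizer_subgroup:
  assumes c: "c \<in> carrier G"
  shows "subgroup (centralizer G c) G"
proof (rule subgroupI)
  fix h assume "h \<in> centralizer G c"
  then have h: "h \<in> carrier G" and comm: "c \<otimes> h = h \<otimes> c"
    by (auto simp: centralizer_def)
  have "inv h \<otimes> c = inv h \<otimes> c \<otimes> (h \<otimes> inv h)" using h c by simp
  also have "\<dots> = inv h \<otimes> (c \<otimes> h) \<otimes> inv h" using h c by (simp add: m_assoc)
  also have "\<dots> = inv h \<otimes> (h \<otimes> c) \<otimes> inv h" using comm by simp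
  also have "\<dots> = c \<otimes> inv h" using h c by (simp add: m_assoc[symmetric])
  finally show "inv h \<in> centralizer G c" using h by (simp add: centralizer_def)
next
  fix h k assume "h \<in> centralizer G c" "k \<in> centralizer G c"
  then have h: "h \<in> carrier G" "c \<otimes> h = h \<otimes> c" and k: "k \<in> carrier G" "c \<otimes> k = k \<otimes> c"
    by (auto simp: centralizer_def)
  have "c \<otimes> (h \<otimes> k) = h \<otimes> c \<otimes> k" using h k c by (simp add: m_assoc[symmetric])
  also have "\<dots> = h \<otimes> k \<otimes> c" using h k c by (simp add: m_assoc)
  finally show "h \<otimes> k \<in> centralizer G c" using h k by (simp add: centralizer_def)
qed (use c in \<open>auto simp: centralizer_def\<close>)

lemma (in group) commutes_with_generate:
  assumes c: "c \<in> carrier G" and S: "S \<subseteq> carrier G"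
    and gens: "\<And>s. s \<in> S \<Longrightarrow> c \<otimes> s = s \<otimes> c"
    and h: "h \<in> generate G S"
  shows "c \<otimes> h = h \<otimes> c"
proof -
  have "S \<subseteq> centralizer G c" using S gens by (auto simp: centralizer_def)
  then have "generate G S \<subseteq> centralizer G c"
    using generate_subgroup_incl centralizer_subgroup[OF c] by blast
  then show ?thesis using h by (auto simp: centralizer_def)
qed

lemma loop_closed: "loop Q m e \<Longrightarrow> x \<in> Q \<Longrightarrow> y \<in> Q \<Longrightarrow> m x y \<in> Q"
  and loop_unit_in: "loop Q m e \<Longrightarrow> e \<in> Q"
  and loop_right_unit: "loop Q m e \<Longrightarrow> x \<in> Q \<Longrightarrow> m x e = x"
  and loop_left_div: "loop Q m e \<Longrightarrow> a \<in> Q \<Longrightarrow> b \<in> Q \<Longrightarrow> \<exists>!x. x \<in> Q \<and> m a x = b"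
  unfolding loop_def by auto

lemma Ltr_Bij:
  assumes lp: "loop Q m e" and a: "a \<in> Q"
  shows "Ltr Q m a \<in> Bij Q"
proof -
  have "inj_on (m a) Q"
  proof (rule inj_onI)
    fix x y assume "x \<in> Q" "y \<in> Q" "m a x = m a y"
    with loop_left_div[OF lp a loop_closed[OF lp a \<open>y \<in> Q\<close>]] show "x = y" by blast
  qed
  moreover have "m a ` Q = Q"
    using loop_closed[OF lp a] loop_left_div[OF lp a] by blast
  ultimately have "bij_betw (m a) Q Q" by (simp add: bij_betw_def)
  then have "bij_betw (Ltr Q m a) Q Q" unfolding Ltr_def
    by (rule bij_betw_cong[THEN iffD1, rotated]) simp
  then show ?thesis unfolding Bij_def Ltr_def by auto
qed

text \<open>A translation is determined by its value at the identity.\<close>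

lemma Ltr_inj_on:
  assumes lp: "loop Q m e"
  shows "inj_on (Ltr Q m) Q"
proof (rule inj_onI)
  fix a b assume a: "a \<in> Q" and b: "b \<in> Q" and eq: "Ltr Q m a = Ltr Q m b"
  have "a = Ltr Q m a e" using a lp by (simp add: Ltr_def loop_unit_in loop_right_unit)
  also have "\<dots> = Ltr Q m b e" using eq by simp
  also have "\<dots> = b" using b lp by (simp add: Ltr_def loop_unit_in loop_right_unit)
  finally show "a = b" .
qed

lemma Ltr_compose_center:
  assumes lp: "loop Q m e" and a: "a \<in> loop_center Q m" and b: "b \<in> Q"
  shows "compose Q (Ltr Q m a) (Ltr Q m b) = Ltr Q m (m a b)"
  using a b loop_closed[OF lp] unfolding compose_def Ltr_def loop_center_def
  by (auto intro!: ext)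

lemma carrier_mult_group:
  "carrier (mult_group Q m) = generate (BijGroup Q) (Ltr Q m ` Q)"
  by (simp add: mult_group_def)

lemma mult_mult_group:
  "f \<in> Bij Q \<Longrightarrow> g \<in> Bij Q \<Longrightarrow> f \<otimes>\<^bsub>mult_group Q m\<^esub> g = compose Q f g"
  by (simp add: mult_group_def BijGroup_def)

lemma Ltrs_in_BijGroup:
  "loop Q m e \<Longrightarrow> Ltr Q m ` Q \<subseteq> carrier (BijGroup Q)"
  using Ltr_Bij by (auto simp: BijGroup_def)

lemma carrier_mult_group_Bij:
  "loop Q m e \<Longrightarrow> carrier (mult_group Q m) \<subseteq> Bij Q"
  using group.generate_incl[OF group_BijGroup Ltrs_in_BijGroup]
  by (simp add: carrier_mult_group BijGroup_def)

lemma Ltr_in_mult_group: "a \<in> Q \<Longrightarrow> Ltr Q m a \<in> carrier (mult_group Q m)"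
  by (auto simp: carrier_mult_group intro: generate.incl)

lemma Ltr_center_commute:
  assumes lp: "loop Q m e" and comm: "\<And>x y. x \<in> Q \<Longrightarrow> y \<in> Q \<Longrightarrow> m x y = m y x"
    and a: "a \<in> loop_center Q m" and x: "x \<in> Q"
  shows "compose Q (Ltr Q m a) (Ltr Q m x) = compose Q (Ltr Q m x) (Ltr Q m a)"
proof -
  have aQ: "a \<in> Q" and assoc: "\<And>y z. y \<in> Q \<Longrightarrow> z \<in> Q \<Longrightarrow> m a (m y z) = m (m a y) z"
    using a unfolding loop_center_def by auto
  have swap: "m a (m x y) = m x (m a y)" if y: "y \<in> Q" for y
  proof -
    have "m x (m a y) = m (m a y) x" using comm x loop_closed[OF lp aQ y] by simp
    also have "\<dots> = m a (m y x)" using assoc[OF y x] by simp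
    also have "\<dots> = m a (m x y)" using comm x y by simp
    finally show ?thesis by simp
  qed
  show ?thesis
    using swap x aQ loop_closed[OF lp] unfolding compose_def Ltr_def by (auto intro!: ext)
qed

lemma commuting_perm_is_central_Ltr:
  assumes lp: "loop Q m e" and comm: "\<And>x y. x \<in> Q \<Longrightarrow> y \<in> Q \<Longrightarrow> m x y = m y x"
    and \<phi>: "\<phi> \<in> Bij Q"
    and commutes: "\<And>x. x \<in> Q \<Longrightarrow> compose Q \<phi> (Ltr Q m x) = compose Q (Ltr Q m x) \<phi>"
  shows "\<phi> e \<in> loop_center Q m" and "\<phi> = Ltr Q m (\<phi> e)"
proof -
  have \<phi>Q: "\<And>y. y \<in> Q \<Longrightarrow> \<phi> y \<in> Q" using Bij_imp_funcset[OF \<phi>] by auto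
  have linear: "\<phi> (m x y) = m x (\<phi> y)" if x: "x \<in> Q" and y: "y \<in> Q" for x y
    using fun_cong[OF commutes[OF x], of y] x y \<phi>Q unfolding compose_def Ltr_def by simp
  define a where "a = \<phi> e"
  have eQ: "e \<in> Q" using lp by (rule loop_unit_in)
  have aQ: "a \<in> Q" using \<phi>Q eQ a_def by simp
  have \<phi>_eq: "\<phi> y = m a y" if y: "y \<in> Q" for y
    using linear[OF y eQ] loop_right_unit[OF lp y] comm[OF y aQ] a_def by simp
  show "\<phi> = Ltr Q m (\<phi> e)"
  proof
    fix y show "\<phi> y = Ltr Q m (\<phi> e) y"
      using \<phi>_eq Bij_imp_extensional[OF \<phi>] unfolding Ltr_def a_def
      by (cases "y \<in> Q") (auto simp: extensional_def)
  qed
  have "m a (m y z) = m (m a y) z" if y: "y \<in> Q" and z: "z \<in> Q" for y z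
  proof -
    have "m a (m y z) = m a (m z y)" using comm y z by simp
    also have "\<dots> = m z (m a y)" using linear[OF z y] \<phi>_eq y z loop_closed[OF lp] by simp
    also have "\<dots> = m (m a y) z" using comm y z aQ loop_closed[OF lp] by simp
    finally show ?thesis .
  qed
  then show "\<phi> e \<in> loop_center Q m" using aQ unfolding loop_center_def a_def by auto
qed

lemma group_center_mult_group:
  assumes lp: "loop Q m e" and comm: "\<And>x y. x \<in> Q \<Longrightarrow> y \<in> Q \<Longrightarrow> m x y = m y x"
  shows "group_center (mult_group Q m) = Ltr Q m ` loop_center Q m"
proof (intro equalityI subsetI)
  fix \<phi> assume "\<phi> \<in> group_center (mult_group Q m)"
  then have \<phi>: "\<phi> \<in> Bij Q"
    and central: "\<And>h. h \<in> carrier (mult_group Q m) \<Longrightarrow>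
        \<phi> \<otimes>\<^bsub>mult_group Q m\<^esub> h = h \<otimes>\<^bsub>mult_group Q m\<^esub> \<phi>"
    using carrier_mult_group_Bij[OF lp] by (auto simp: group_center_def)
  have "compose Q \<phi> (Ltr Q m x) = compose Q (Ltr Q m x) \<phi>" if x: "x \<in> Q" for x
    using central[OF Ltr_in_mult_group[OF x]] mult_mult_group[OF \<phi> Ltr_Bij[OF lp x]]
      mult_mult_group[OF Ltr_Bij[OF lp x] \<phi>] by simp
  from commuting_perm_is_central_Ltr[OF lp comm \<phi> this]
  show "\<phi> \<in> Ltr Q m ` loop_center Q m" by (metis imageI)
next
  fix \<phi> assume "\<phi> \<in> Ltr Q m ` loop_center Q m"
  then obtain a where a: "a \<in> loop_center Q m" and \<phi>: "\<phi> = Ltr Q m a" by auto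
  have aQ: "a \<in> Q" using a by (simp add: loop_center_def)
  interpret G: group "BijGroup Q" by (rule group_BijGroup)
  have "\<phi> \<otimes>\<^bsub>BijGroup Q\<^esub> h = h \<otimes>\<^bsub>BijGroup Q\<^esub> \<phi>"
    if h: "h \<in> generate (BijGroup Q) (Ltr Q m ` Q)" for h
  proof (rule G.commutes_with_generate[OF _ Ltrs_in_BijGroup[OF lp] _ h])
    show "\<phi> \<in> carrier (BijGroup Q)" using Ltr_Bij[OF lp aQ] \<phi> by (simp add: BijGroup_def)
    fix s assume "s \<in> Ltr Q m ` Q"
    then obtain x where x: "x \<in> Q" and s: "s = Ltr Q m x" by auto
    show "\<phi> \<otimes>\<^bsub>BijGroup Q\<^esub> s = s \<otimes>\<^bsub>BijGroup Q\<^esub> \<phi>"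
      using Ltr_center_commute[OF lp comm a x] Ltr_Bij[OF lp aQ] Ltr_Bij[OF lp x] \<phi> s
      by (simp add: BijGroup_def)
  qed
  then show "\<phi> \<in> group_center (mult_group Q m)"
    using Ltr_in_mult_group[OF aQ] \<phi>
    by (simp add: group_center_def carrier_mult_group, simp add: mult_group_def)
qed

theorem mainTheorem6:
  assumes "comm_moufang_loop Q m e"
  shows "group_center (mult_group Q m) = Ltr Q m ` loop_center Q m
       \<and> Ltr Q m \<in> iso (loop_center_struct Q m e)
                       ((mult_group Q m)\<lparr>carrier := group_center (mult_group Q m)\<rparr>)"
proof -
  have lp: "loop Q m e" and comm: "\<And>x y. x \<in> Q \<Longrightarrow> y \<in> Q \<Longrightarrow> m x y = m y x"
    using assms unfolding comm_moufang_loop_def by auto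
  have center: "group_center (mult_group Q m) = Ltr Q m ` loop_center Q m"
    using group_center_mult_group[OF lp comm] .
  have inj: "inj_on (Ltr Q m) (loop_center Q m)"
    using Ltr_inj_on[OF lp] by (rule inj_on_subset) (auto simp: loop_center_def)
  have hom: "Ltr Q m (m a b) = Ltr Q m a \<otimes>\<^bsub>mult_group Q m\<^esub> Ltr Q m b"
    if a: "a \<in> loop_center Q m" and b: "b \<in> loop_center Q m" for a b
  proof -
    have aQ: "a \<in> Q" and bQ: "b \<in> Q" using a b by (auto simp: loop_center_def)
    show ?thesis
      using Ltr_compose_center[OF lp a bQ] mult_mult_group[OF Ltr_Bij[OF lp aQ] Ltr_Bij[OF lp bQ]]
      by simp
  qed
  have "Ltr Q m \<in> iso (loop_center_struct Q m e)
                       ((mult_group Q m)\<lparr>carrier := group_center (mult_group Q m)\<rparr>)"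
    using center inj hom
    by (auto simp: iso_def hom_def loop_center_struct_def bij_betw_def)
  with center show ?thesis by simp
qed

end
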